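(* Let $\Gamma$ be a distance-regular graph with valency $k$ and diameter $D\geq 2$, and let $\alpha=\lceil \frac{k}{a_1+1}\rceil$. Then $$c_2-1\geq \frac{\alpha(a_1+1)-k}{\binom{\alpha}{2}},$$ and if equality holds then $\Gamma$ is a Terwilliger graph.
   Context: A connected graph $\Gamma$ of diameter $D$ is distance-regular if there are integers $b_i,c_i$ ($0\le i\le D$) such that for any two vertices $x,y$ at distance $i$, exactly $c_i$ neighbours of $y$ are at distance $i-1$ from $x$ and exactly $b_i$ neighbours of $y$ are at distance $i+1$ from $x$. Then $\Gamma$ is regular of valency $k=b_0$, and $a_i:=k-b_i-c_i$. A Terwilliger graph is a connected non-complete graph such that for any two vertices $u,v$ at distance two, the subgraph induced on their common neighbours is a clique of size $\mu$, for some fixed $\mu\geq 1$. *)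

theory Defs
  imports Complex_Main
begin

definition simple_graph :: "'a set \<Rightarrow> ('a \<Rightarrow> 'a \<Rightarrow> bool) \<Rightarrow> bool" where
  "simple_graph V E \<longleftrightarrow> finite V \<and> V \<noteq> {} \<and>
     (\<forall>x y. E x y \<longrightarrow> x \<in> V \<and> y \<in> V) \<and>
     (\<forall>x y. E x y \<longrightarrow> E y x) \<and> (\<forall>x. \<not> E x x)"

fun walk :: "('a \<Rightarrow> 'a \<Rightarrow> bool) \<Rightarrow> nat \<Rightarrow> 'a \<Rightarrow> 'a \<Rightarrow> bool" where
  "walk E 0 x y = (x = y)"
| "walk E (Suc n) x y = (\<exists>z. E x z \<and> walk E n z y)"

definition connected_graph :: "'a set \<Rightarrow> ('a \<Rightarrow> 'a \<Rightarrow> bool) \<Rightarrow> bool" where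
  "connected_graph V E \<longleftrightarrow> (\<forall>x\<in>V. \<forall>y\<in>V. \<exists>n. walk E n x y)"

definition gdist :: "('a \<Rightarrow> 'a \<Rightarrow> bool) \<Rightarrow> 'a \<Rightarrow> 'a \<Rightarrow> nat" where
  "gdist E x y = (LEAST n. walk E n x y)"

definition diameter :: "'a set \<Rightarrow> ('a \<Rightarrow> 'a \<Rightarrow> bool) \<Rightarrow> nat" where
  "diameter V E = Max {gdist E x y | x y. x \<in> V \<and> y \<in> V}"

text \<open>Distance-regular with diameter D and intersection numbers b i, c i (0 \<le> i \<le> D).
  Valency k = b 0 (regularity follows from the case i = 0).\<close>
definition distance_regular ::
  "'a set \<Rightarrow> ('a \<Rightarrow> 'a \<Rightarrow> bool) \<Rightarrow> nat \<Rightarrow> (nat \<Rightarrow> nat) \<Rightarrow> (nat \<Rightarrow> nat) \<Rightarrow> bool" where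
  "distance_regular V E D b c \<longleftrightarrow>
     simple_graph V E \<and> connected_graph V E \<and> diameter V E = D \<and>
     (\<forall>i\<le>D. \<forall>x\<in>V. \<forall>y\<in>V. gdist E x y = i \<longrightarrow>
        (i \<ge> 1 \<longrightarrow> card {z\<in>V. E y z \<and> gdist E x z = i - 1} = c i) \<and>
        card {z\<in>V. E y z \<and> gdist E x z = i + 1} = b i)"

definition is_clique :: "('a \<Rightarrow> 'a \<Rightarrow> bool) \<Rightarrow> 'a set \<Rightarrow> bool" where
  "is_clique E S \<longleftrightarrow> (\<forall>x\<in>S. \<forall>y\<in>S. x \<noteq> y \<longrightarrow> E x y)"

definition complete_graph :: "'a set \<Rightarrow> ('a \<Rightarrow> 'a \<Rightarrow> bool) \<Rightarrow> bool" where
  "complete_graph V E \<longleftrightarrow> is_clique E V"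

definition terwilliger_graph :: "'a set \<Rightarrow> ('a \<Rightarrow> 'a \<Rightarrow> bool) \<Rightarrow> bool" where
  "terwilliger_graph V E \<longleftrightarrow> connected_graph V E \<and> \<not> complete_graph V E \<and>
     (\<exists>\<mu>::nat. \<mu> \<ge> 1 \<and> (\<forall>u\<in>V. \<forall>v\<in>V. gdist E u v = 2 \<longrightarrow>
        (let S = {w\<in>V. E u w \<and> E v w} in is_clique E S \<and> card S = \<mu>)))"

end

theory Submission
  imports Defs
begin

text \<open>Fix a vertex \<open>x\<close> and two vertices \<open>u, v\<close> of its neighbourhood \<open>\<Delta>(x)\<close> at distance 2.
  A maximal coclique of \<open>\<Delta>(x)\<close> through \<open>u, v\<close> dominates \<open>\<Delta>(x)\<close>, while each vertex dominates
  only \<open>a\<^sub>1 + 1\<close> vertices of \<open>\<Delta>(x)\<close>; so it has at least \<open>\<alpha>\<close> elements, and we keep \<open>\<alpha>\<close> of them,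
  including \<open>u, v\<close>. Their closed neighbourhoods within \<open>\<Delta>(x)\<close> have union of size at most \<open>k\<close>,
  and two of them meet exactly in the common neighbours of \<open>x\<close> and a pair at distance 2,
  of which there are at most \<open>c\<^sub>2 - 1\<close> because \<open>x\<close> is itself a common neighbour of the pair.
  The second Bonferroni inequality gives
  \<open>\<alpha>(a\<^sub>1 + 1) - k \<le> (\<alpha>(\<alpha>-1)/2 - 1)(c\<^sub>2 - 1) + m\<close>, where \<open>m\<close> counts the common neighbours
  of \<open>x, u, v\<close>. Since \<open>m \<le> c\<^sub>2 - 1\<close> the bound follows. If the \<open>\<mu>\<close>-graph of some \<open>u, v\<close>
  contained two non-adjacent vertices \<open>w, w'\<close>, then choosing \<open>x = w\<close> gives \<open>m \<le> c\<^sub>2 - 2\<close>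
  and a strict inequality; so equality forces all \<open>\<mu>\<close>-graphs to be cliques.\<close>

lemma card_UN_Bonferroni:
  fixes A :: "'i \<Rightarrow> 'b set"
  assumes "finite C" "\<And>i. i \<in> C \<Longrightarrow> finite (A i)"
  shows "2 * (\<Sum>i\<in>C. card (A i))
           \<le> 2 * card (\<Union>i\<in>C. A i) + (\<Sum>i\<in>C. \<Sum>j\<in>C - {i}. card (A i \<inter> A j))"
  using assms
proof (induction C rule: finite_induct)
  case empty
  show ?case by simp
next
  case (insert a C)
  let ?U = "\<Union>i\<in>C. A i"
  have "card (A a) + card ?U = card (A a \<union> ?U) + card (A a \<inter> ?U)"
    using insert by (intro card_Un_Int) auto
  moreover have "card (A a \<inter> ?U) \<le> (\<Sum>j\<in>C. card (A a \<inter> A j))"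
  proof -
    have "A a \<inter> ?U = (\<Union>j\<in>C. A a \<inter> A j)" by auto
    then show ?thesis using card_UN_le[OF insert.hyps(1), of "\<lambda>j. A a \<inter> A j"] by argo
  qed
  moreover have "(\<Sum>i\<in>insert a C. \<Sum>j\<in>insert a C - {i}. card (A i \<inter> A j)) =
      2 * (\<Sum>j\<in>C. card (A a \<inter> A j)) + (\<Sum>i\<in>C. \<Sum>j\<in>C - {i}. card (A i \<inter> A j))"
  proof -
    have "insert a C - {i} = insert a (C - {i})" if "i \<in> C" for i
      using that insert.hyps(2) by auto
    then have "(\<Sum>i\<in>C. \<Sum>j\<in>insert a C - {i}. card (A i \<inter> A j)) =
        (\<Sum>i\<in>C. card (A a \<inter> A i) + (\<Sum>j\<in>C - {i}. card (A i \<inter> A j)))"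
      using insert.hyps by (intro sum.cong) (auto simp: Int_commute)
    moreover have "insert a C - {a} = C" using insert.hyps(2) by auto
    ultimately show ?thesis using insert.hyps by (simp add: sum.distrib)
  qed
  ultimately show ?case using insert by simp
qed

lemma sum_offdiagonal_le:
  fixes f :: "'i \<Rightarrow> 'i \<Rightarrow> nat"
  assumes "finite C" "u \<in> C" "v \<in> C" "u \<noteq> v"
    and "\<And>i j. i \<in> C \<Longrightarrow> j \<in> C \<Longrightarrow> i \<noteq> j \<Longrightarrow> f i j \<le> B"
    and "f u v \<le> m" "f v u \<le> m"
  shows "(\<Sum>i\<in>C. \<Sum>j\<in>C - {i}. f i j) + 2 * B \<le> card C * (card C - 1) * B + 2 * m"
proof -
  let ?P = "Sigma C (\<lambda>i. C - {i})" and ?Q = "{(u, v), (v, u)}"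
  have "finite ?P" using assms(1) by auto
  have "?Q \<subseteq> ?P" using assms(2-4) by auto
  have "card ?P = card C * (card C - 1)"
    using assms(1) by (simp add: card_SigmaI card_Diff_singleton)
  have "(\<Sum>i\<in>C. \<Sum>j\<in>C - {i}. f i j) = (\<Sum>(i, j)\<in>?P. f i j)"
    using assms(1) by (simp add: sum.Sigma)
  also have "\<dots> = (\<Sum>(i, j)\<in>?P - ?Q. f i j) + (\<Sum>(i, j)\<in>?Q. f i j)"
    using sum.subset_diff[OF \<open>?Q \<subseteq> ?P\<close> \<open>finite ?P\<close>] by simp
  also have "(\<Sum>(i, j)\<in>?P - ?Q. f i j) \<le> card (?P - ?Q) * B"
    using sum_bounded_above[of "?P - ?Q" "\<lambda>(i, j). f i j" B] assms(5) by fastforce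
  also have "(\<Sum>(i, j)\<in>?Q. f i j) \<le> 2 * m" using assms(4,6,7) by simp
  finally have "(\<Sum>i\<in>C. \<Sum>j\<in>C - {i}. f i j) \<le> card (?P - ?Q) * B + 2 * m"
    by simp
  moreover have "card ?P = card (?P - ?Q) + 2"
    using card_Diff_subset[OF _ \<open>?Q \<subseteq> ?P\<close>] card_mono[OF \<open>finite ?P\<close> \<open>?Q \<subseteq> ?P\<close>] assms(4)
    by simp
  ultimately show ?thesis using \<open>card ?P = card C * (card C - 1)\<close> by (simp add: add_mult_distrib)
qed

lemma two_mult_choose_two: "2 * (n choose 2) = n * (n - 1)"
  by (cases n) (simp_all add: choose_two)

lemma real_bound_from_doubled:
  fixes n a k c m :: nat
  assumes "1 \<le> c" "2 * (n * a) + 2 * (c - 1) \<le> 2 * k + n * (n - 1) * (c - 1) + 2 * m"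
  shows "real (n * a) - real k \<le> (real (n choose 2) - 1) * (real c - 1) + real m"
proof -
  obtain d where d: "c = Suc d" using assms(1) by (cases c) auto
  have "real (2 * (n * a) + 2 * d) \<le> real (2 * k + 2 * (n choose 2) * d + 2 * m)"
    using assms(2) unfolding two_mult_choose_two of_nat_le_iff d by simp
  then show ?thesis unfolding d by (simp add: algebra_simps)
qed

locale connected_simple_graph =
  fixes V :: "'a set" and E :: "'a \<Rightarrow> 'a \<Rightarrow> bool"
  assumes simple: "simple_graph V E" and connected: "connected_graph V E"
begin

lemma finite_V: "finite V"
  and adj_in_V: "E x y \<Longrightarrow> x \<in> V \<and> y \<in> V"
  and adj_sym: "E x y \<Longrightarrow> E y x"
  and adj_irrefl: "\<not> E x x"
  using simple unfolding simple_graph_def by auto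

lemma walk_gdist: "x \<in> V \<Longrightarrow> y \<in> V \<Longrightarrow> walk E (gdist E x y) x y"
  using connected unfolding connected_graph_def gdist_def by (meson LeastI_ex)

lemma gdist_le_walk: "walk E n x y \<Longrightarrow> gdist E x y \<le> n"
  unfolding gdist_def by (rule Least_le)

lemma gdist_eq_0_iff: "x \<in> V \<Longrightarrow> y \<in> V \<Longrightarrow> gdist E x y = 0 \<longleftrightarrow> x = y"
  using walk_gdist[of x y] gdist_le_walk[of 0 x x] by auto

lemma gdist_eq_1_iff:
  assumes "x \<in> V" "y \<in> V"
  shows "gdist E x y = 1 \<longleftrightarrow> E x y"
proof
  assume "gdist E x y = 1"
  then show "E x y" using walk_gdist[OF assms] by simp
next
  assume "E x y"
  then have "gdist E x y \<le> 1" using gdist_le_walk[of 1 x y] by auto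
  moreover have "x \<noteq> y" using \<open>E x y\<close> adj_irrefl by auto
  ultimately show "gdist E x y = 1" using gdist_eq_0_iff[OF assms] by linarith
qed

lemma gdist_eq_2_iff:
  assumes "x \<in> V" "y \<in> V"
  shows "gdist E x y = 2 \<longleftrightarrow> x \<noteq> y \<and> \<not> E x y \<and> (\<exists>z. E x z \<and> E z y)"
proof
  assume d: "gdist E x y = 2"
  then have "walk E 2 x y" using walk_gdist[OF assms] by simp
  then show "x \<noteq> y \<and> \<not> E x y \<and> (\<exists>z. E x z \<and> E z y)"
    using d gdist_eq_0_iff[OF assms] gdist_eq_1_iff[OF assms] by (auto simp: numeral_2_eq_2)
next
  assume "x \<noteq> y \<and> \<not> E x y \<and> (\<exists>z. E x z \<and> E z y)"
  moreover from this have "gdist E x y \<le> 2"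
    using gdist_le_walk[of 2 x y] by (auto simp: numeral_2_eq_2)
  ultimately show "gdist E x y = 2"
    using gdist_eq_0_iff[OF assms] gdist_eq_1_iff[OF assms] by linarith
qed

lemma gdist_eq_2_if_common_neighbour:
  "E z x \<Longrightarrow> E z y \<Longrightarrow> x \<noteq> y \<Longrightarrow> \<not> E x y \<Longrightarrow> gdist E x y = 2"
  using gdist_eq_2_iff adj_in_V adj_sym by blast

lemma exists_gdist_eq_2:
  assumes "diameter V E \<ge> 2"
  obtains u v where "u \<in> V" "v \<in> V" "gdist E u v = 2"
proof -
  let ?S = "{gdist E x y | x y. x \<in> V \<and> y \<in> V}"
  have "?S = (\<lambda>(x, y). gdist E x y) ` (V \<times> V)" by auto
  then have "finite ?S" using finite_V by simp
  moreover have "?S \<noteq> {}" using simple unfolding simple_graph_def by fast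
  ultimately have "diameter V E \<in> ?S" unfolding diameter_def by (rule Max_in)
  then obtain x y where xy: "x \<in> V" "y \<in> V" and d: "gdist E x y = diameter V E" by auto
  then obtain m where m: "gdist E x y = Suc (Suc m)"
    using assms by (metis add_2_eq_Suc le_Suc_ex)
  then obtain z w where "E x z" "E z w" "walk E m w y"
    using walk_gdist[OF xy] by auto
  moreover from this have "x \<noteq> w" "\<not> E x w"
    using gdist_le_walk[of m x y] gdist_le_walk[of "Suc m" x y] m by auto
  ultimately have "gdist E x w = 2"
    using gdist_eq_2_if_common_neighbour adj_sym by blast
  then show ?thesis using that xy adj_in_V \<open>E z w\<close> by blast
qed

lemma exists_dominating_coclique:
  assumes "\<Delta> \<subseteq> V" "T \<subseteq> \<Delta>" "\<forall>p\<in>T. \<forall>q\<in>T. \<not> E p q"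
  obtains S where "T \<subseteq> S" "S \<subseteq> \<Delta>" "\<forall>p\<in>S. \<forall>q\<in>S. \<not> E p q"
    "\<forall>z\<in>\<Delta>. z \<in> S \<or> (\<exists>w\<in>S. E w z)"
proof -
  define F where "F = {S. T \<subseteq> S \<and> S \<subseteq> \<Delta> \<and> (\<forall>p\<in>S. \<forall>q\<in>S. \<not> E p q)}"
  have "finite \<Delta>" using assms(1) finite_V finite_subset by blast
  then have "card S < Suc (card \<Delta>)" if "S \<in> F" for S
    using that card_mono[OF \<open>finite \<Delta>\<close>, of S] unfolding F_def by simp
  moreover have "T \<in> F" using assms unfolding F_def by simp
  ultimately obtain S where S: "S \<in> F" and max: "\<And>S'. S' \<in> F \<Longrightarrow> card S' \<le> card S"
    using ex_has_greatest_nat[of "\<lambda>S. S \<in> F" T card] by blast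
  then have "finite S" using \<open>finite \<Delta>\<close> finite_subset unfolding F_def by blast
  have "z \<in> S \<or> (\<exists>w\<in>S. E w z)" if "z \<in> \<Delta>" for z
  proof (rule ccontr)
    assume z: "\<not> (z \<in> S \<or> (\<exists>w\<in>S. E w z))"
    then have "\<not> E z w" "\<not> E w z" if "w \<in> S" for w
      using that adj_sym by blast+
    then have "insert z S \<in> F"
      using S \<open>z \<in> \<Delta>\<close> adj_irrefl unfolding F_def by auto
    then have "card (insert z S) \<le> card S" by (rule max)
    then show False using \<open>finite S\<close> z by simp
  qed
  with S show ?thesis unfolding F_def by (intro that[of S]) auto
qed

end

locale distance_regular_graph =
  fixes V :: "'a set" and E :: "'a \<Rightarrow> 'a \<Rightarrow> bool" and D :: nat and b c :: "nat \<Rightarrow> nat"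
  assumes distance_regular: "distance_regular V E D b c" and diameter_ge_2: "2 \<le> D"
begin

sublocale connected_simple_graph V E
  using distance_regular unfolding distance_regular_def by unfold_locales auto

abbreviation a\<^sub>1 :: nat where "a\<^sub>1 \<equiv> b 0 - b 1 - c 1"

abbreviation \<alpha> :: nat where "\<alpha> \<equiv> nat \<lceil>real (b 0) / real (a\<^sub>1 + 1)\<rceil>"

lemma intersection_numbers:
  assumes "i \<le> D" "x \<in> V" "y \<in> V" "gdist E x y = i"
  shows "1 \<le> i \<Longrightarrow> card {z\<in>V. E y z \<and> gdist E x z = i - 1} = c i"
    and "card {z\<in>V. E y z \<and> gdist E x z = i + 1} = b i"
  using distance_regular assms unfolding distance_regular_def by blast+

lemma card_neighbours:
  assumes "y \<in> V"
  shows "card {z\<in>V. E y z} = b 0"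
proof -
  have "{z\<in>V. E y z \<and> gdist E y z = 0 + 1} = {z\<in>V. E y z}"
    using gdist_eq_1_iff assms by auto
  then show ?thesis using intersection_numbers(2)[of 0 y y] gdist_eq_0_iff assms by simp
qed

lemma card_common_neighbours_gdist_2:
  assumes "x \<in> V" "y \<in> V" "gdist E x y = 2"
  shows "card {z\<in>V. E x z \<and> E y z} = c 2"
proof -
  have "{z\<in>V. E y z \<and> gdist E x z = 2 - 1} = {z\<in>V. E x z \<and> E y z}"
    using gdist_eq_1_iff assms by auto
  then show ?thesis using intersection_numbers(1)[OF diameter_ge_2 assms] by simp
qed

lemma valency_decomposition:
  assumes "E x y"
  shows "c 1 = 1" and "b 0 = card {z\<in>V. E x z \<and> E y z} + 1 + b 1"
proof -
  have xy: "x \<in> V" "y \<in> V" "gdist E x y = 1" using assms adj_in_V gdist_eq_1_iff by auto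
  have "1 \<le> D" using diameter_ge_2 by simp
  note numbers = intersection_numbers[OF this xy]
  have "{z\<in>V. E y z \<and> gdist E x z = 0} = {x}" using gdist_eq_0_iff xy assms adj_sym by auto
  then show "c 1 = 1" using numbers(1) by simp
  let ?A = "{z\<in>V. E x z \<and> E y z}" and ?B = "{z\<in>V. E y z \<and> gdist E x z = 2}"
  have "{z\<in>V. E y z} = insert x (?A \<union> ?B)"
  proof (intro set_eqI iffI)
    fix z assume z: "z \<in> {z\<in>V. E y z}"
    then have "gdist E x z \<le> 2" using gdist_le_walk[of 2 x z] assms by (auto simp: numeral_2_eq_2)
    then show "z \<in> insert x (?A \<union> ?B)"
      using z gdist_eq_0_iff[of x z] gdist_eq_1_iff[of x z] xy by (auto simp: le_Suc_eq numeral_2_eq_2)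
  qed (use xy assms adj_sym in auto)
  moreover have "x \<notin> ?A \<union> ?B" using adj_irrefl gdist_eq_0_iff[of x x] xy by auto
  moreover have "?A \<inter> ?B = {}" using gdist_eq_1_iff[of x] xy by fastforce
  moreover have "card ?B = b 1" using numbers(2) by (simp add: numeral_2_eq_2)
  ultimately show "b 0 = card ?A + 1 + b 1"
    using card_neighbours[OF xy(2)] finite_V by (simp add: card_Un_disjoint)
qed

lemma card_common_neighbours_adj: "E x y \<Longrightarrow> card {z\<in>V. E x z \<and> E y z} = a\<^sub>1"
  using valency_decomposition by fastforce

lemma obtain_path_gdist_2:
  obtains u x v where "E u x" "E x v" "gdist E u v = 2"
proof -
  obtain u v where "u \<in> V" "v \<in> V" "gdist E u v = 2"
    using exists_gdist_eq_2 distance_regular diameter_ge_2 unfolding distance_regular_def by metis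
  with that show ?thesis using gdist_eq_2_iff by blast
qed

lemma c_2_pos: "0 < c 2"
proof -
  obtain u x v where "E u x" "E x v" "gdist E u v = 2" by (rule obtain_path_gdist_2)
  then have "x \<in> {z\<in>V. E u z \<and> E v z}" "card {z\<in>V. E u z \<and> E v z} = c 2"
    using card_common_neighbours_gdist_2 adj_sym[of x v] adj_in_V by auto
  then show ?thesis using finite_V card_gt_0_iff by fastforce
qed

lemma two_le_alpha: "2 \<le> \<alpha>"
proof -
  obtain u x v where ux: "E u x" and xv: "E x v" and uv: "gdist E u v = 2"
    by (rule obtain_path_gdist_2)
  have "1 \<le> D" "u \<in> V" "x \<in> V" "gdist E u x = 1"
    using diameter_ge_2 ux adj_in_V gdist_eq_1_iff by auto
  then have "card {z\<in>V. E x z \<and> gdist E u z = 2} = b 1"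
    using intersection_numbers(2)[of 1 u x] by (simp add: numeral_2_eq_2)
  moreover have "v \<in> {z\<in>V. E x z \<and> gdist E u z = 2}" using xv uv adj_in_V by auto
  ultimately have "0 < b 1" using finite_V card_gt_0_iff by fastforce
  then have "real (a\<^sub>1 + 1) < real (b 0)"
    using valency_decomposition(2)[OF ux] card_common_neighbours_adj[OF ux] by simp
  then have "1 < \<lceil>real (b 0) / real (a\<^sub>1 + 1)\<rceil>" by (simp add: less_ceiling_iff)
  then show ?thesis by linarith
qed

lemma card_closed_common_neighbourhood:
  "E x w \<Longrightarrow> card (insert w {z\<in>V. E x z \<and> E w z}) = a\<^sub>1 + 1"
  using card_common_neighbours_adj[of x w] finite_V adj_irrefl[of w] by simp

lemma alpha_le_card_dominating:
  assumes "x \<in> V" "S \<subseteq> {z\<in>V. E x z}" "\<forall>z\<in>{z\<in>V. E x z}. z \<in> S \<or> (\<exists>w\<in>S. E w z)"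
  shows "\<alpha> \<le> card S"
proof -
  let ?N = "\<lambda>w. insert w {z\<in>V. E x z \<and> E w z}"
  have "finite S" using finite_subset[OF assms(2)] finite_V by simp
  have "{z\<in>V. E x z} \<subseteq> (\<Union>w\<in>S. ?N w)" using assms(3) by blast
  then have "b 0 \<le> card (\<Union>w\<in>S. ?N w)"
    unfolding card_neighbours[OF assms(1), symmetric]
    by (rule card_mono[rotated]) (simp add: \<open>finite S\<close> finite_V)
  also have "\<dots> \<le> (\<Sum>w\<in>S. card (?N w))" by (rule card_UN_le[OF \<open>finite S\<close>])
  also have "\<dots> = (\<Sum>w\<in>S. a\<^sub>1 + 1)"
    using assms(2) card_closed_common_neighbourhood by (intro sum.cong) auto
  finally have "b 0 \<le> card S * (a\<^sub>1 + 1)" by simp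
  then have "real (b 0) \<le> real (card S) * real (a\<^sub>1 + 1)"
    unfolding of_nat_mult[symmetric] of_nat_le_iff .
  then have "real (b 0) / real (a\<^sub>1 + 1) \<le> real (card S)"
    by (simp add: divide_le_eq del: of_nat_Suc)
  then show ?thesis by (simp add: ceiling_le nat_le_iff)
qed

lemma obtain_coclique_in_neighbourhood:
  assumes "E x u" "E x v" "gdist E u v = 2"
  obtains C where "u \<in> C" "v \<in> C" "C \<subseteq> {z\<in>V. E x z}" "\<forall>p\<in>C. \<forall>q\<in>C. \<not> E p q" "card C = \<alpha>"
proof -
  have "x \<in> V" using assms(1) adj_in_V by blast
  have uv: "u \<noteq> v" "\<not> E u v" "\<not> E v u"
    using assms adj_in_V gdist_eq_2_iff adj_sym by metis+
  then have coclique: "\<forall>p\<in>{u, v}. \<forall>q\<in>{u, v}. \<not> E p q" using adj_irrefl by auto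
  have uv_in: "{u, v} \<subseteq> {z\<in>V. E x z}" using assms adj_in_V by auto
  obtain S where S: "{u, v} \<subseteq> S" "S \<subseteq> {z\<in>V. E x z}" "\<forall>p\<in>S. \<forall>q\<in>S. \<not> E p q"
    and dominating: "\<forall>z\<in>{z\<in>V. E x z}. z \<in> S \<or> (\<exists>w\<in>S. E w z)"
    by (rule exists_dominating_coclique[OF _ uv_in coclique]) auto
  have "finite S" using finite_subset[OF S(2)] finite_V by simp
  have "card (S - {u, v}) = card S - 2" using S(1) \<open>finite S\<close> uv(1) by (simp add: card_Diff_subset)
  then have "\<alpha> - 2 \<le> card (S - {u, v})"
    using alpha_le_card_dominating[OF \<open>x \<in> V\<close> S(2) dominating] by linarith
  then obtain T where T: "T \<subseteq> S - {u, v}" "card T = \<alpha> - 2"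
    by (meson obtain_subset_with_card_n)
  then have "finite T" using \<open>finite S\<close> finite_subset by blast
  have "u \<notin> T" "v \<notin> T" using T(1) by auto
  then have "card (insert u (insert v T)) = card T + 2" using \<open>finite T\<close> uv(1) by simp
  then have "card (insert u (insert v T)) = \<alpha>" using T(2) two_le_alpha by linarith
  with S T show ?thesis by (intro that[of "insert u (insert v T)"]) auto
qed

lemma card_triple_common_neighbours_le:
  assumes "E x i" "E x j" "i \<noteq> j" "\<not> E i j"
  shows "card {z\<in>V. E x z \<and> E i z \<and> E j z} \<le> c 2 - 1"
proof -
  have "i \<in> V" "j \<in> V" "x \<in> V" using assms(1,2) adj_in_V by auto
  then have "card {z\<in>V. E i z \<and> E j z} = c 2"
    using card_common_neighbours_gdist_2 gdist_eq_2_if_common_neighbour[OF assms] by blast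
  moreover have "x \<in> {z\<in>V. E i z \<and> E j z}"
    using \<open>x \<in> V\<close> adj_sym[OF assms(1)] adj_sym[OF assms(2)] by simp
  moreover have "{z\<in>V. E x z \<and> E i z \<and> E j z} \<subseteq> {z\<in>V. E i z \<and> E j z} - {x}"
    using adj_irrefl by auto
  then have "card {z\<in>V. E x z \<and> E i z \<and> E j z} \<le> card ({z\<in>V. E i z \<and> E j z} - {x})"
    by (rule card_mono[rotated]) (simp add: finite_V)
  ultimately show ?thesis by (simp add: finite_V)
qed

lemma excess_le_triple_common_neighbours:
  assumes xu: "E x u" and xv: "E x v" and uv: "gdist E u v = 2"
  shows "real (\<alpha> * (a\<^sub>1 + 1)) - real (b 0)
           \<le> (real (\<alpha> choose 2) - 1) * (real (c 2) - 1) + real (card {z\<in>V. E x z \<and> E u z \<and> E v z})"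
proof -
  obtain C where C: "u \<in> C" "v \<in> C" "C \<subseteq> {z\<in>V. E x z}"
    and coclique: "\<forall>p\<in>C. \<forall>q\<in>C. \<not> E p q" and "card C = \<alpha>"
    by (rule obtain_coclique_in_neighbourhood[OF xu xv uv])
  have "x \<in> V" using xu adj_in_V by blast
  have "finite C" using finite_subset[OF C(3)] finite_V by simp
  have "u \<noteq> v" using C(1) coclique adj_in_V xu xv uv gdist_eq_2_iff by blast
  define A where "A w = insert w {z\<in>V. E x z \<and> E w z}" for w
  have "finite (A w)" for w unfolding A_def using finite_V by simp
  have "(\<Sum>i\<in>C. card (A i)) = \<alpha> * (a\<^sub>1 + 1)"
    using C(3) \<open>card C = \<alpha>\<close> card_closed_common_neighbourhood unfolding A_def
    by (simp add: subset_iff)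
  moreover have "card (\<Union>i\<in>C. A i) \<le> b 0"
  proof -
    have "(\<Union>i\<in>C. A i) \<subseteq> {z\<in>V. E x z}" using C(3) unfolding A_def by auto
    then have "card (\<Union>i\<in>C. A i) \<le> card {z\<in>V. E x z}"
      by (rule card_mono[rotated]) (simp add: finite_V)
    then show ?thesis using card_neighbours[OF \<open>x \<in> V\<close>] by simp
  qed
  moreover have "A i \<inter> A j = {z\<in>V. E x z \<and> E i z \<and> E j z}" if "i \<in> C" "j \<in> C" "i \<noteq> j" for i j
    using that coclique unfolding A_def by auto
  then have "(\<Sum>i\<in>C. \<Sum>j\<in>C - {i}. card (A i \<inter> A j)) + 2 * (c 2 - 1)
      \<le> \<alpha> * (\<alpha> - 1) * (c 2 - 1) + 2 * card {z\<in>V. E x z \<and> E u z \<and> E v z}"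
    unfolding \<open>card C = \<alpha>\<close>[symmetric] using C coclique \<open>u \<noteq> v\<close> card_triple_common_neighbours_le
    by (intro sum_offdiagonal_le[OF \<open>finite C\<close>]) (auto simp: subset_iff conj_commute)
  moreover have "2 * (\<Sum>i\<in>C. card (A i))
      \<le> 2 * card (\<Union>i\<in>C. A i) + (\<Sum>i\<in>C. \<Sum>j\<in>C - {i}. card (A i \<inter> A j))"
    using \<open>finite C\<close> \<open>\<And>w. finite (A w)\<close> by (rule card_UN_Bonferroni)
  ultimately have "2 * (\<alpha> * (a\<^sub>1 + 1)) + 2 * (c 2 - 1)
      \<le> 2 * b 0 + \<alpha> * (\<alpha> - 1) * (c 2 - 1) + 2 * card {z\<in>V. E x z \<and> E u z \<and> E v z}"
    by linarith
  then show ?thesis using c_2_pos by (intro real_bound_from_doubled) auto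
qed

lemma excess_le_binomial_mu:
  "real (\<alpha> * (a\<^sub>1 + 1)) - real (b 0) \<le> real (\<alpha> choose 2) * (real (c 2) - 1)"
proof -
  obtain u x v where ux: "E u x" and xv: "E x v" and uv: "gdist E u v = 2"
    by (rule obtain_path_gdist_2)
  have "u \<noteq> v" "\<not> E u v" using uv gdist_eq_2_iff adj_in_V ux xv by blast+
  then have "real (card {z\<in>V. E x z \<and> E u z \<and> E v z}) \<le> real (c 2) - 1"
    using card_triple_common_neighbours_le[OF adj_sym[OF ux] xv] c_2_pos by (simp add: of_nat_diff)
  moreover have "(real (\<alpha> choose 2) - 1) * (real (c 2) - 1) + (real (c 2) - 1)
      = real (\<alpha> choose 2) * (real (c 2) - 1)" by algebra
  ultimately show ?thesis
    using excess_le_triple_common_neighbours[OF adj_sym[OF ux] xv uv] by linarith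
qed

lemma common_neighbours_clique_if_tight:
  assumes tight: "real (\<alpha> * (a\<^sub>1 + 1)) - real (b 0) = real (\<alpha> choose 2) * (real (c 2) - 1)"
    and pq: "p \<in> V" "q \<in> V" "gdist E p q = 2"
  shows "is_clique E {w\<in>V. E p w \<and> E q w}"
proof (rule ccontr)
  let ?M = "{w\<in>V. E p w \<and> E q w}"
  assume "\<not> is_clique E ?M"
  then obtain w w' where w: "w \<in> ?M" "w' \<in> ?M" "w \<noteq> w'" "\<not> E w w'"
    unfolding is_clique_def by blast
  have "card ?M = c 2" using card_common_neighbours_gdist_2[OF pq] .
  moreover have "{w, w'} \<subseteq> ?M" using w by auto
  ultimately have "card (?M - {w, w'}) = c 2 - 2" "2 \<le> c 2"
    using w(3) finite_V card_mono[of ?M "{w, w'}"] by (auto simp: card_Diff_subset)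
  moreover have "{z\<in>V. E w z \<and> E p z \<and> E q z} \<subseteq> ?M - {w, w'}" using w(4) adj_irrefl by auto
  then have "card {z\<in>V. E w z \<and> E p z \<and> E q z} \<le> card (?M - {w, w'})"
    by (rule card_mono[rotated]) (simp add: finite_V)
  ultimately have "real (card {z\<in>V. E w z \<and> E p z \<and> E q z}) \<le> real (c 2) - 2"
    by (simp add: of_nat_diff)
  moreover have "E w p" "E w q" using w(1) adj_sym by auto
  note excess_le_triple_common_neighbours[OF this pq(3)]
  moreover have "(real (\<alpha> choose 2) - 1) * (real (c 2) - 1) + (real (c 2) - 1)
      = real (\<alpha> choose 2) * (real (c 2) - 1)" by algebra
  ultimately show False using tight by linarith
qed

lemma terwilliger_if_tight:
  assumes "real (\<alpha> * (a\<^sub>1 + 1)) - real (b 0) = real (\<alpha> choose 2) * (real (c 2) - 1)"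
  shows "terwilliger_graph V E"
proof -
  obtain u x v where "E u x" "E x v" "gdist E u v = 2" by (rule obtain_path_gdist_2)
  then have "\<not> complete_graph V E"
    using gdist_eq_2_iff adj_in_V unfolding complete_graph_def is_clique_def by blast
  moreover have "\<forall>p\<in>V. \<forall>q\<in>V. gdist E p q = 2 \<longrightarrow>
      (let S = {w\<in>V. E p w \<and> E q w} in is_clique E S \<and> card S = c 2)"
    using common_neighbours_clique_if_tight[OF assms] card_common_neighbours_gdist_2 by simp
  ultimately show ?thesis
    unfolding terwilliger_graph_def using connected c_2_pos by (intro conjI exI[of _ "c 2"]) auto
qed

end

theorem theorem4:
  fixes V :: "'a set" and E :: "'a \<Rightarrow> 'a \<Rightarrow> bool" and D :: nat and b c :: "nat \<Rightarrow> nat"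
  assumes "distance_regular V E D b c" and "D \<ge> 2"
  defines "k \<equiv> b 0"
  defines "a1 \<equiv> k - b 1 - c 1"
  defines "\<alpha> \<equiv> nat \<lceil>real k / real (a1 + 1)\<rceil>"
  shows "real (c 2) - 1 \<ge> (real (\<alpha> * (a1 + 1)) - real k) / real (\<alpha> choose 2) \<and>
         (real (c 2) - 1 = (real (\<alpha> * (a1 + 1)) - real k) / real (\<alpha> choose 2)
           \<longrightarrow> terwilliger_graph V E)"
proof -
  interpret distance_regular_graph V E D b c
    using assms(1,2) by unfold_locales
  note facts = excess_le_binomial_mu terwilliger_if_tight two_le_alpha
  note facts = facts[folded k_def, folded a1_def, folded \<alpha>_def]
  have "0 < real (\<alpha> choose 2)" using facts(3) by simp
  then show ?thesis
    using facts(1,2) by (simp add: pos_divide_le_eq eq_divide_eq mult.commute)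
qed

end
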